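(* Let $\sigma>0$, $k\ge 0$ an integer, $\rho\ge 0$, and let $\mathcal{O}$ be a finite set of objects in $\mathbb{R}^d$ such that every subset $\mathcal{O}'\subseteq\mathcal{O}$ that is $\sigma$-exposed has density at most $\rho$. If $\mathcal{O}$ is $(\sigma,k)$-exposed, then the density of $\mathcal{O}$ is at most $(2k+1)\rho$.
   Context: For sets $X, Y\subseteq\mathbb{R}^d$ and $\sigma>0$, $X$ $\sigma$-shadows $Y$ if $\max_{q\in Y} \mathrm{dist}(q, X) \le \sigma\cdot \mathrm{diam}(Y)$, where $\mathrm{dist}(q,X)=\min_{p\in X}\|q-p\|$. A set of objects is $\sigma$-exposed if no object in the set $\sigma$-shadows another (distinct) object of the set. A set $\mathcal{O}$ of objects is $(\sigma,k)$-exposed if each object of $\mathcal{O}$ is $\sigma$-shadowed by at most $k$ other objects of $\mathcal{O}$. The density of a finite set $\mathcal{O}$ of objects in $\mathbb{R}^d$ is the maximum, over all closed balls $B$, of the number of objects $o\in\mathcal{O}$ that intersect $B$ and satisfy $\mathrm{diam}(o)\ge \mathrm{diam}(B)$. *)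

theory Defs
  imports "HOL-Analysis.Analysis"
begin

text \<open>X sigma-shadows Y: max over q in Y of dist(q,X) is at most sigma * diam(Y).
  The max/min of the paper are rendered as Sup / infdist (they coincide for compact objects).\<close>
definition shadows :: "real \<Rightarrow> 'a::euclidean_space set \<Rightarrow> 'a set \<Rightarrow> bool" where
  "shadows \<sigma> X Y \<longleftrightarrow> (SUP q\<in>Y. infdist q X) \<le> \<sigma> * diameter Y"

definition exposed :: "real \<Rightarrow> 'a::euclidean_space set set \<Rightarrow> bool" where
  "exposed \<sigma> \<O> \<longleftrightarrow> (\<forall>X\<in>\<O>. \<forall>Y\<in>\<O>. X \<noteq> Y \<longrightarrow> \<not> shadows \<sigma> X Y)"

definition k_exposed :: "real \<Rightarrow> nat \<Rightarrow> 'a::euclidean_space set set \<Rightarrow> bool" where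
  "k_exposed \<sigma> k \<O> \<longleftrightarrow> (\<forall>Y\<in>\<O>. card {X\<in>\<O>. X \<noteq> Y \<and> shadows \<sigma> X Y} \<le> k)"

definition density :: "'a::euclidean_space set set \<Rightarrow> nat" where
  "density \<O> = Max {card {Z\<in>\<O>. Z \<inter> cball c r \<noteq> {} \<and> diameter Z \<ge> diameter (cball c r)}
                     | c r. r > 0}"

end

theory Submission
  imports Defs
begin

text \<open>The shadowing relation is a digraph of in-degree at most k on \<open>\<O>\<close>. Counting edges twice,
  every nonempty vertex set contains a vertex with at most 2k neighbours in either direction, so
  greedy colouring gives a proper colouring with 2k+1 colours. Each colour class is \<sigma>-exposed,
  hence has density at most \<rho>, and density is subadditive over a partition.\<close>

definition in_neighbours :: "('b \<Rightarrow> 'b \<Rightarrow> bool) \<Rightarrow> 'b set \<Rightarrow> 'b \<Rightarrow> 'b set" where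
  "in_neighbours E S v = {u\<in>S. u \<noteq> v \<and> E u v}"

definition neighbours :: "('b \<Rightarrow> 'b \<Rightarrow> bool) \<Rightarrow> 'b set \<Rightarrow> 'b \<Rightarrow> 'b set" where
  "neighbours E S v = {u\<in>S. u \<noteq> v \<and> (E u v \<or> E v u)}"

lemma sum_card_out_eq_sum_card_in:
  assumes "finite S"
  shows "(\<Sum>v\<in>S. card {u\<in>S. u \<noteq> v \<and> E v u}) = (\<Sum>v\<in>S. card (in_neighbours E S v))"
proof -
  have "(\<Sum>v\<in>S. card {u\<in>S. u \<noteq> v \<and> E v u}) = (\<Sum>v\<in>S. \<Sum>u\<in>S. if u \<noteq> v \<and> E v u then 1 else 0)"
    using assms by (simp add: sum.inter_filter[symmetric])
  also have "\<dots> = (\<Sum>u\<in>S. \<Sum>v\<in>S. if u \<noteq> v \<and> E v u then 1 else 0)"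
    by (rule sum.swap)
  also have "\<dots> = (\<Sum>v\<in>S. card (in_neighbours E S v))"
    using assms by (simp add: in_neighbours_def sum.inter_filter[symmetric] eq_commute)
  finally show ?thesis .
qed

lemma exists_few_neighbours:
  assumes fin: "finite S" and "S \<noteq> {}"
    and indeg: "\<And>v. v \<in> S \<Longrightarrow> card (in_neighbours E S v) \<le> k"
  shows "\<exists>v\<in>S. card (neighbours E S v) \<le> 2 * k"
proof (rule ccontr)
  assume "\<not> ?thesis"
  then have "card S * (2 * k + 1) \<le> (\<Sum>v\<in>S. card (neighbours E S v))"
    using sum_bounded_below[of S "2 * k + 1" "\<lambda>v. card (neighbours E S v)"]
    by (simp add: not_le Suc_le_eq mult.commute)
  also have "\<dots> \<le> (\<Sum>v\<in>S. card (in_neighbours E S v) + card {u\<in>S. u \<noteq> v \<and> E v u})"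
  proof (rule sum_mono)
    fix v
    have "neighbours E S v = in_neighbours E S v \<union> {u\<in>S. u \<noteq> v \<and> E v u}"
      by (auto simp: neighbours_def in_neighbours_def)
    then show "card (neighbours E S v) \<le> card (in_neighbours E S v) + card {u\<in>S. u \<noteq> v \<and> E v u}"
      by (simp add: card_Un_le)
  qed
  also have "\<dots> = 2 * (\<Sum>v\<in>S. card (in_neighbours E S v))"
    using sum_card_out_eq_sum_card_in[OF fin] by (simp add: sum.distrib)
  also have "\<dots> \<le> 2 * (card S * k)"
    using sum_bounded_above[of S "\<lambda>v. card (in_neighbours E S v)" k] indeg by simp
  finally show False
    using \<open>S \<noteq> {}\<close> fin by (simp add: algebra_simps)
qed

lemma card_in_neighbours_mono:
  assumes "finite S" and "S' \<subseteq> S"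
  shows "card (in_neighbours E S' v) \<le> card (in_neighbours E S v)"
  using assms by (intro card_mono) (auto simp: in_neighbours_def)

lemma proper_colouring_bounded_indegree:
  assumes "finite S" and "\<And>v. v \<in> S \<Longrightarrow> card (in_neighbours E S v) \<le> k"
  shows "\<exists>f. (\<forall>x\<in>S. \<forall>y\<in>S. x \<noteq> y \<and> E x y \<longrightarrow> f x \<noteq> f y) \<and> (\<forall>x\<in>S. f x \<le> 2 * k)"
  using assms
proof (induction S rule: finite_psubset_induct)
  case (psubset S)
  show ?case
  proof (cases "S = {}")
    case False
    obtain v where v: "v \<in> S" and few: "card (neighbours E S v) \<le> 2 * k"
      using exists_few_neighbours[OF psubset.hyps False psubset.prems] by blast
    have "card (in_neighbours E (S - {v}) w) \<le> k" if "w \<in> S - {v}" for w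
      using card_in_neighbours_mono[OF psubset.hyps, of "S - {v}"] psubset.prems that
      by (meson Diff_subset DiffD1 le_trans)
    then obtain f where proper: "\<forall>x\<in>S - {v}. \<forall>y\<in>S - {v}. x \<noteq> y \<and> E x y \<longrightarrow> f x \<noteq> f y"
      and bounded: "\<forall>x\<in>S - {v}. f x \<le> 2 * k"
      using psubset.IH[of "S - {v}"] v by blast
    have "card (f ` neighbours E S v) \<le> 2 * k"
      using card_image_le[of "neighbours E S v" f] psubset.hyps few
      by (auto simp: neighbours_def)
    then have "\<not> {..2 * k} \<subseteq> f ` neighbours E S v"
      using card_mono[of "f ` neighbours E S v" "{..2 * k}"] psubset.hyps
      by (auto simp: neighbours_def)
    then obtain c where c: "c \<le> 2 * k" "c \<notin> f ` neighbours E S v"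
      by auto
    have "\<forall>x\<in>S. \<forall>y\<in>S. x \<noteq> y \<and> E x y \<longrightarrow> (f(v := c)) x \<noteq> (f(v := c)) y"
      using proper c by (auto simp: neighbours_def)
    moreover have "\<forall>x\<in>S. (f(v := c)) x \<le> 2 * k"
      using bounded c by auto
    ultimately show ?thesis by blast
  qed simp
qed

abbreviation ball_count :: "'a::euclidean_space set set \<Rightarrow> 'a \<Rightarrow> real \<Rightarrow> nat" where
  "ball_count \<O> c r \<equiv> card {Z\<in>\<O>. Z \<inter> cball c r \<noteq> {} \<and> diameter Z \<ge> diameter (cball c r)}"

lemma finite_ball_counts:
  assumes "finite \<O>"
  shows "finite {ball_count \<O> c r | c r. r > 0}"
  by (rule finite_subset[of _ "{..card \<O>}"]) (use assms in \<open>auto intro!: card_mono\<close>)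

lemma ball_count_le_density:
  assumes "finite \<O>" and "r > 0"
  shows "ball_count \<O> c r \<le> density \<O>"
  unfolding density_def using assms finite_ball_counts[OF assms(1)] by (intro Max_ge) blast+

lemma density_le:
  fixes \<O> :: "'a::euclidean_space set set"
  assumes "finite \<O>" and "\<And>c r. r > 0 \<Longrightarrow> ball_count \<O> c r \<le> M"
  shows "density \<O> \<le> M"
  unfolding density_def
proof (rule Max.boundedI)
  show "finite {ball_count \<O> c r | c r. r > 0}"
    using finite_ball_counts[OF assms(1)] .
  show "{ball_count \<O> c r | c r. r > 0} \<noteq> {}"
    by (auto intro: exI[of _ "1::real"])
qed (use assms(2) in auto)

lemma density_le_sum_fibres:
  fixes \<O> :: "'a::euclidean_space set set"
  assumes fin: "finite \<O>" and "finite I" and into: "\<And>X. X \<in> \<O> \<Longrightarrow> f X \<in> I"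
  shows "density \<O> \<le> (\<Sum>i\<in>I. density {X\<in>\<O>. f X = i})"
proof (rule density_le[OF fin])
  fix c :: 'a and r :: real
  assume "r > 0"
  let ?meets = "\<lambda>Z. Z \<inter> cball c r \<noteq> {} \<and> diameter Z \<ge> diameter (cball c r)"
  have fibres: "{Z\<in>\<O>. ?meets Z} = (\<Union>i\<in>I. {Z\<in>{X\<in>\<O>. f X = i}. ?meets Z})"
    using into by auto
  have "ball_count \<O> c r = (\<Sum>i\<in>I. ball_count {X\<in>\<O>. f X = i} c r)"
    unfolding fibres using \<open>finite I\<close> fin by (subst card_UN_disjoint) auto
  also have "\<dots> \<le> (\<Sum>i\<in>I. density {X\<in>\<O>. f X = i})"
    using fin \<open>r > 0\<close> by (intro sum_mono ball_count_le_density) auto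
  finally show "ball_count \<O> c r \<le> (\<Sum>i\<in>I. density {X\<in>\<O>. f X = i})" .
qed

theorem mainTheorem9:
  fixes \<O> :: "'a::euclidean_space set set"
    and \<sigma> \<rho> :: real and k :: nat
  assumes "\<sigma> > 0" and "\<rho> \<ge> 0" and "finite \<O>"
    and "\<And>\<O>'. \<O>' \<subseteq> \<O> \<Longrightarrow> exposed \<sigma> \<O>' \<Longrightarrow> real (density \<O>') \<le> \<rho>"
    and "k_exposed \<sigma> k \<O>"
  shows "real (density \<O>) \<le> (2 * real k + 1) * \<rho>"
proof -
  obtain f where proper: "\<forall>X\<in>\<O>. \<forall>Y\<in>\<O>. X \<noteq> Y \<and> shadows \<sigma> X Y \<longrightarrow> f X \<noteq> f Y"
    and colours: "\<forall>X\<in>\<O>. f X \<le> 2 * k"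
    using proper_colouring_bounded_indegree[OF \<open>finite \<O>\<close>, of "shadows \<sigma>" k] assms(5)
    unfolding k_exposed_def in_neighbours_def by blast
  have "exposed \<sigma> {X\<in>\<O>. f X = i}" for i
    unfolding exposed_def using proper by blast
  then have class_density: "real (density {X\<in>\<O>. f X = i}) \<le> \<rho>" for i
    using assms(4) by auto
  have "density \<O> \<le> (\<Sum>i\<le>2 * k. density {X\<in>\<O>. f X = i})"
    using colours by (intro density_le_sum_fibres[OF \<open>finite \<O>\<close>]) auto
  then have "real (density \<O>) \<le> (\<Sum>i\<le>2 * k. real (density {X\<in>\<O>. f X = i}))"
    by (metis of_nat_le_iff of_nat_sum)
  also have "\<dots> \<le> (\<Sum>i\<le>2 * k. \<rho>)"
    using class_density by (rule sum_mono)
  also have "\<dots> = (2 * real k + 1) * \<rho>"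
    by simp
  finally show ?thesis .
qed

end
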